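(* There exist a joint distribution $P$ of $(x,a,y)$ with two protected groups $a\in\{1,2\}$ and binary labels $y\in\{0,1\}$, a score function $\mathcal{R}$ that is Bayes-optimal for each protected group, i.e. $\mathcal{R}(x,a)=P(y=1\mid x,a)$, and a choice of bias measure $\mathcal{B}$ (demographic parity or equal opportunity) such that the post-processing method restricted to deterministic thresholds (described in the context), with loss equal to the misclassification rate, is not slack-consistent: there is an individual $(x,a)$ and slacks $0<\beta_1<\beta_2<\beta_3$ such that $f_{\beta_1}(x,a), f_{\beta_2}(x,a), f_{\beta_3}(x,a)$ are neither non-decreasing nor non-increasing.
   Context: Setting: individuals are pairs $(x,a)$ with features $x$ and group $a\in\{1,2\}$, label $y\in\{0,1\}$, distributed according to $P$. A classifier $f$ assigns each $(x,a)$ a prediction $f(x,a)\in\{0,1\}$ (more generally a probability in $[0,1]$). Demographic-parity bias: $\mathcal{B}(f)=E[f(x,a)\mid a=1]-E[f(x,a)\mid a=2]$. Equal-opportunity bias: $\mathcal{B}(f)=E[f(x,a)\mid a=1,y=1]-E[f(x,a)\mid a=2,y=1]$. Misclassification loss $\mathcal{L}(f)=P(f(x,a)\neq y)$. Post-processing with deterministic thresholds and slack $\beta>0$: a pair of thresholds $(t_1,t_2)$ defines the classifier $f(x,a)=\mathbb{1}[\mathcal{R}(x,a)\ge t_a]$; among all such pairs minimizing $\mathcal{L}$ subject to $|\mathcal{B}|\le\beta$, keep those with smallest $|\mathcal{B}|$, then those with lowest threshold for group 1 (equivalently, largest positive rate in group 1 being excluded—i.e. smallest $t_1$ in the sense of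 the normalized threshold ordering), then return the one with lowest threshold for group 2. The returned classifier is $f_\beta$. Slack-consistency: for every individual $(x,a)$, the map $\beta\mapsto f_\beta(x,a)$ is monotonic in $\beta>0$. *)

theory Defs
  imports "HOL-Probability.Probability"
begin

datatype bias_kind = DemParity | EqOpp

definition cprob :: "('x \<times> nat \<times> bool) pmf \<Rightarrow> ('x \<times> nat \<times> bool) set \<Rightarrow> ('x \<times> nat \<times> bool) set \<Rightarrow> real" where
  "cprob P A C = measure_pmf.prob P (A \<inter> C) / measure_pmf.prob P C"

definition bayes_optimal :: "('x \<times> nat \<times> bool) pmf \<Rightarrow> ('x \<Rightarrow> nat \<Rightarrow> real) \<Rightarrow> bool" where
  "bayes_optimal P R \<longleftrightarrow> (\<forall>x a y. (x, a, y) \<in> set_pmf P \<longrightarrow>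
      R x a = cprob P {(x', a', y'). y'} {(x', a', y'). x' = x \<and> a' = a})"

definition thr_clf :: "('x \<Rightarrow> nat \<Rightarrow> real) \<Rightarrow> real \<Rightarrow> real \<Rightarrow> 'x \<Rightarrow> nat \<Rightarrow> bool" where
  "thr_clf R t1 t2 x a = (if a = 1 then t1 \<le> R x a else t2 \<le> R x a)"

definition loss :: "('x \<times> nat \<times> bool) pmf \<Rightarrow> ('x \<Rightarrow> nat \<Rightarrow> bool) \<Rightarrow> real" where
  "loss P f = measure_pmf.prob P {(x, a, y). f x a \<noteq> y}"

definition bias :: "bias_kind \<Rightarrow> ('x \<times> nat \<times> bool) pmf \<Rightarrow> ('x \<Rightarrow> nat \<Rightarrow> bool) \<Rightarrow> real" where
  "bias k P f = (case k of
      DemParity \<Rightarrow> cprob P {(x, a, y). f x a} {(x, a, y). a = 1}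
                 - cprob P {(x, a, y). f x a} {(x, a, y). a = 2}
    | EqOpp \<Rightarrow> cprob P {(x, a, y). f x a} {(x, a, y). a = 1 \<and> y}
                 - cprob P {(x, a, y). f x a} {(x, a, y). a = 2 \<and> y})"

text \<open>Candidate thresholds for group a: the scores occurring in group a, plus the threshold 2
  (above every probability score, i.e. "predict 0 for everybody").  Every real threshold
  induces the same classifier as one of these, and the ordering "lower threshold" between
  distinct classifiers is the same as between these representatives.\<close>
definition cand :: "('x \<times> nat \<times> bool) pmf \<Rightarrow> ('x \<Rightarrow> nat \<Rightarrow> real) \<Rightarrow> nat \<Rightarrow> real set" where
  "cand P R a = {R x a | x y. (x, a, y) \<in> set_pmf P} \<union> {2}"

definition argmin_set :: "('b \<Rightarrow> real) \<Rightarrow> 'b set \<Rightarrow> 'b set" where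
  "argmin_set g S = {p \<in> S. \<forall>q \<in> S. g p \<le> g q}"

definition feasible :: "bias_kind \<Rightarrow> ('x \<times> nat \<times> bool) pmf \<Rightarrow> ('x \<Rightarrow> nat \<Rightarrow> real) \<Rightarrow> real \<Rightarrow> (real \<times> real) set" where
  "feasible k P R \<beta> = {(t1, t2). t1 \<in> cand P R 1 \<and> t2 \<in> cand P R 2 \<and>
       \<bar>bias k P (thr_clf R t1 t2)\<bar> \<le> \<beta>}"

definition selected :: "bias_kind \<Rightarrow> ('x \<times> nat \<times> bool) pmf \<Rightarrow> ('x \<Rightarrow> nat \<Rightarrow> real) \<Rightarrow> real \<Rightarrow> (real \<times> real) set" where
  "selected k P R \<beta> =
     argmin_set snd (argmin_set fst
       (argmin_set (\<lambda>(t1, t2). \<bar>bias k P (thr_clf R t1 t2)\<bar>)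
         (argmin_set (\<lambda>(t1, t2). loss P (thr_clf R t1 t2)) (feasible k P R \<beta>))))"

definition f_beta :: "bias_kind \<Rightarrow> ('x \<times> nat \<times> bool) pmf \<Rightarrow> ('x \<Rightarrow> nat \<Rightarrow> real) \<Rightarrow> real \<Rightarrow> 'x \<Rightarrow> nat \<Rightarrow> bool" where
  "f_beta k P R \<beta> = (let (t1, t2) = (THE p. p \<in> selected k P R \<beta>) in thr_clf R t1 t2)"

end

theory Submission
  imports Defs
begin

text \<open>Group 1 consists of one individual with score 1, group 2 of an individual with score 1/3
  (mass 3/9) and one with score 1/4 (mass 4/9).  Under demographic parity, accepting group 1
  costs a bias of 1, which can only be offset by accepting group-2 individuals, at a loss.
  For \<beta> = 1/2 the best feasible choice rejects everybody; for \<beta> = 3/5 it becomes affordable to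
  accept group 1 together with the score-1/3 individual of group 2; for \<beta> = 1 the unconstrained
  Bayes classifier, which rejects all of group 2, is feasible.  So the score-1/3 individual is
  rejected, accepted, rejected.\<close>

lemma argmin_set_singleton [simp]: "argmin_set g {s} = {s}"
  unfolding argmin_set_def by auto

lemma argmin_set_eq_singleton:
  assumes "s \<in> S" and "\<And>q. q \<in> S \<Longrightarrow> q \<noteq> s \<Longrightarrow> g s < g q"
  shows "argmin_set g S = {s}"
  using assms unfolding argmin_set_def by force

lemma f_beta_eq_unique_loss_minimizer:
  assumes feasible: "(t, u) \<in> feasible k P R \<beta>"
    and strict_min: "\<And>t' u'. (t', u') \<in> feasible k P R \<beta> \<Longrightarrow> (t', u') \<noteq> (t, u) \<Longrightarrow>
      loss P (thr_clf R t u) < loss P (thr_clf R t' u')"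
  shows "f_beta k P R \<beta> = thr_clf R t u"
proof -
  have "argmin_set (\<lambda>(t, u). loss P (thr_clf R t u)) (feasible k P R \<beta>) = {(t, u)}"
    using feasible strict_min by (intro argmin_set_eq_singleton) auto
  then have "selected k P R \<beta> = {(t, u)}"
    unfolding selected_def by simp
  then show ?thesis
    unfolding f_beta_def by simp
qed

definition example_outcomes :: "((nat \<times> nat \<times> bool) \<times> real) list" where
  "example_outcomes =
     [((0, 1, True), 2/9), ((1, 2, True), 1/9), ((1, 2, False), 2/9),
      ((2, 2, True), 1/9), ((2, 2, False), 3/9)]"

definition example_pmf :: "(nat \<times> nat \<times> bool) pmf" where
  "example_pmf = pmf_of_list example_outcomes"

definition example_score :: "nat \<Rightarrow> nat \<Rightarrow> real" where
  "example_score x a = (if x = 0 then 1 else if x = 1 then 1/3 else 1/4)"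

lemma pmf_of_list_wf_example: "pmf_of_list_wf example_outcomes"
  by (simp add: pmf_of_list_wf_def example_outcomes_def)

lemma set_pmf_example: "set_pmf example_pmf = fst ` set example_outcomes"
  unfolding example_pmf_def
  by (rule set_pmf_of_list_eq[OF pmf_of_list_wf_example]) (auto simp: example_outcomes_def)

lemma prob_example:
  "measure_pmf.prob example_pmf A = sum_list (map snd (filter (\<lambda>x. fst x \<in> A) example_outcomes))"
  unfolding example_pmf_def by (rule measure_pmf_of_list[OF pmf_of_list_wf_example])

lemma cand_eq_image:
  "cand P R a = (\<lambda>(x, b, y). R x a) ` Set.filter (\<lambda>(x, b, y). b = a) (set_pmf P) \<union> {2}"
  unfolding cand_def by force

lemma cand_example:
  "cand example_pmf example_score 1 = {1, 2}"
  "cand example_pmf example_score 2 = {1/3, 1/4, 2}"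
  unfolding cand_eq_image set_pmf_example image_set filter_set
  by (simp_all add: example_outcomes_def example_score_def insert_commute)

lemma bayes_optimal_example: "bayes_optimal example_pmf example_score"
  unfolding bayes_optimal_def set_pmf_example
  by (simp add: example_outcomes_def cprob_def prob_example example_score_def
      imp_disjL all_conj_distrib)

lemma loss_example:
  "loss example_pmf (thr_clf example_score t u) =
     (if t \<le> 1 then 0 else 2/9) + (if u \<le> 1/3 then 2/9 else 1/9) + (if u \<le> 1/4 then 3/9 else 1/9)"
  unfolding loss_def prob_example by (simp add: example_outcomes_def thr_clf_def example_score_def)

lemma bias_example:
  "bias DemParity example_pmf (thr_clf example_score t u) =
     (if t \<le> 1 then 1 else 0) - ((if u \<le> 1/3 then 3/7 else 0) + (if u \<le> 1/4 then 4/7 else 0))"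
  unfolding bias_def cprob_def prob_example
  by (simp add: example_outcomes_def thr_clf_def example_score_def)

lemma f_beta_example:
  "f_beta DemParity example_pmf example_score (1/2) = thr_clf example_score 2 2"
  "f_beta DemParity example_pmf example_score (3/5) = thr_clf example_score 1 (1/3)"
  "f_beta DemParity example_pmf example_score 1 = thr_clf example_score 1 2"
  by (rule f_beta_eq_unique_loss_minimizer;
      unfold feasible_def cand_example; auto simp: loss_example bias_example)+

lemma f_beta_example_individual:
  "\<not> f_beta DemParity example_pmf example_score (1/2) 1 2"
  "f_beta DemParity example_pmf example_score (3/5) 1 2"
  "\<not> f_beta DemParity example_pmf example_score 1 1 2"
  by (simp_all add: f_beta_example thr_clf_def example_score_def)

lemma mem_set_pmf_example: "(1, 2, True) \<in> set_pmf example_pmf"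
  unfolding set_pmf_example by (simp add: example_outcomes_def)

theorem theorem2:
  shows "\<exists>(P :: (nat \<times> nat \<times> bool) pmf) (R :: nat \<Rightarrow> nat \<Rightarrow> real) (k :: bias_kind).
     finite (set_pmf P) \<and>
     set_pmf P \<subseteq> {(x, a, y). a \<in> {1, 2}} \<and>
     measure_pmf.prob P {(x, a, y). a = 1 \<and> y} > 0 \<and>
     measure_pmf.prob P {(x, a, y). a = 2 \<and> y} > 0 \<and>
     bayes_optimal P R \<and>
     (\<exists>x a y \<beta>1 \<beta>2 \<beta>3. (x, a, y) \<in> set_pmf P \<and> 0 < \<beta>1 \<and> \<beta>1 < \<beta>2 \<and> \<beta>2 < \<beta>3 \<and>
        (let v1 = of_bool (f_beta k P R \<beta>1 x a) :: real;
             v2 = of_bool (f_beta k P R \<beta>2 x a);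
             v3 = of_bool (f_beta k P R \<beta>3 x a)
         in \<not> (v1 \<le> v2 \<and> v2 \<le> v3) \<and> \<not> (v1 \<ge> v2 \<and> v2 \<ge> v3)))"
proof -
  have "finite (set_pmf example_pmf)" "set_pmf example_pmf \<subseteq> {(x, a, y). a \<in> {1, 2}}"
    unfolding set_pmf_example by (auto simp: example_outcomes_def)
  moreover have "measure_pmf.prob example_pmf {(x, a, y). a = 1 \<and> y} > 0"
    "measure_pmf.prob example_pmf {(x, a, y). a = 2 \<and> y} > 0"
    unfolding prob_example by (simp_all add: example_outcomes_def)
  moreover have "(0::real) < 1/2" "(1/2::real) < 3/5" "(3/5::real) < 1" by simp_all
  ultimately show ?thesis
    using bayes_optimal_example mem_set_pmf_example f_beta_example_individual
    unfolding Let_def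
    by (intro exI[of _ example_pmf] exI[of _ example_score] exI[of _ DemParity] conjI; simp?; blast)
qed

end
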